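(* Let $M$ be a tame paving matroid of rank $n$ on $[d]$ with set of dependent hyperplanes $\mathcal{L}$. Then for every $\gamma\in V_{\mathcal{C}(M)}$ and every $\epsilon>0$ there exists $\widetilde\gamma=(\widetilde\gamma_1,\ldots,\widetilde\gamma_d)\in V_{\mathcal{C}(M)}$ with $\|\gamma_p-\widetilde\gamma_p\|<\epsilon$ for all $p\in[d]$ such that $\dim\widetilde\gamma_l=n-1$ for every $l\in\mathcal{L}$, where $\widetilde\gamma_l=\operatorname{span}(\widetilde\gamma_p:p\in l)$.
   Context: A matroid of rank $n$ is paving if every circuit has size $n$ or $n+1$; a dependent hyperplane is a maximal subset of size at least $n$ all of whose $n$-subsets are circuits; tame means any three distinct dependent hyperplanes have empty intersection. The circuit variety $V_{\mathcal{C}(M)}$ is the set of tuples $(\gamma_1,\ldots,\gamma_d)$ of vectors in $\mathbb{C}^n$ such that $(\gamma_p)_{p\in S}$ is linearly dependent for every dependent set $S$ of $M$. *)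

theory Defs
  imports "HOL-Analysis.Analysis"
begin

definition matroid :: "'a set \<Rightarrow> 'a set set \<Rightarrow> bool" where
  "matroid E Ind \<longleftrightarrow> finite E \<and> Ind \<subseteq> Pow E \<and> {} \<in> Ind \<and>
     (\<forall>X Y. X \<in> Ind \<and> Y \<subseteq> X \<longrightarrow> Y \<in> Ind) \<and>
     (\<forall>X Y. X \<in> Ind \<and> Y \<in> Ind \<and> card X < card Y \<longrightarrow> (\<exists>y\<in>Y - X. insert y X \<in> Ind))"

definition matroid_rank :: "'a set set \<Rightarrow> nat" where
  "matroid_rank Ind = Max (card ` Ind)"

definition dependent_set :: "'a set \<Rightarrow> 'a set set \<Rightarrow> 'a set \<Rightarrow> bool" where
  "dependent_set E Ind S \<longleftrightarrow> S \<subseteq> E \<and> S \<notin> Ind"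

definition circuit :: "'a set \<Rightarrow> 'a set set \<Rightarrow> 'a set \<Rightarrow> bool" where
  "circuit E Ind C \<longleftrightarrow> dependent_set E Ind C \<and> (\<forall>D. D \<subset> C \<longrightarrow> D \<in> Ind)"

definition paving :: "'a set \<Rightarrow> 'a set set \<Rightarrow> bool" where
  "paving E Ind \<longleftrightarrow> (\<forall>C. circuit E Ind C \<longrightarrow>
      card C = matroid_rank Ind \<or> card C = matroid_rank Ind + 1)"

definition hyp_candidate :: "'a set \<Rightarrow> 'a set set \<Rightarrow> 'a set \<Rightarrow> bool" where
  "hyp_candidate E Ind H \<longleftrightarrow> H \<subseteq> E \<and> card H \<ge> matroid_rank Ind \<and>
     (\<forall>S. S \<subseteq> H \<and> card S = matroid_rank Ind \<longrightarrow> circuit E Ind S)"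

definition dependent_hyperplane :: "'a set \<Rightarrow> 'a set set \<Rightarrow> 'a set \<Rightarrow> bool" where
  "dependent_hyperplane E Ind H \<longleftrightarrow> hyp_candidate E Ind H \<and>
     (\<forall>H'. hyp_candidate E Ind H' \<and> H \<subseteq> H' \<longrightarrow> H' = H)"

definition tame :: "'a set \<Rightarrow> 'a set set \<Rightarrow> bool" where
  "tame E Ind \<longleftrightarrow> (\<forall>H1 H2 H3. dependent_hyperplane E Ind H1 \<and> dependent_hyperplane E Ind H2 \<and>
      dependent_hyperplane E Ind H3 \<and> H1 \<noteq> H2 \<and> H1 \<noteq> H3 \<and> H2 \<noteq> H3 \<longrightarrow> H1 \<inter> H2 \<inter> H3 = {})"

definition lin_dep_family :: "('a \<Rightarrow> complex ^ 'n) \<Rightarrow> 'a set \<Rightarrow> bool" where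
  "lin_dep_family \<gamma> S \<longleftrightarrow> (\<exists>c :: 'a \<Rightarrow> complex. (\<exists>p\<in>S. c p \<noteq> 0) \<and> (\<Sum>p\<in>S. c p *s \<gamma> p) = 0)"

text \<open>Circuit variety: tuples indexed by the ground set (values outside E irrelevant).\<close>
definition circuit_variety :: "'a set \<Rightarrow> 'a set set \<Rightarrow> ('a \<Rightarrow> complex ^ 'n) set" where
  "circuit_variety E Ind = {\<gamma>. \<forall>S. dependent_set E Ind S \<longrightarrow> lin_dep_family \<gamma> S}"

end

theory Submission
  imports Defs
begin

(* For a paving matroid of rank n, a configuration lies in the circuit variety exactly when every
   dependent hyperplane L spans a subspace of dimension at most n - 1. Choose for each L a hyperplane
   H L containing gamma(L) and let W p be the intersection of the H L over the dependent hyperplanes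
   through p: every configuration with each point p in W p stays in the variety, and since by tameness
   p lies on at most two dependent hyperplanes, dim W p >= n - 2. Moving points one at a time inside
   their W p, to nearby positions off finitely many proper subspaces, keeps all independent
   (n-1)-subsets found so far independent while growing an independent subset of the current
   hyperplane L. The H L can be chosen so that some point of L has dim W p = n - 1, or two points of L
   have incomparable W p; either way n - 1 independent points of L are reached. Induction over the
   finitely many dependent hyperplanes finishes the proof. *)

section \<open>Paving matroids and their dependent hyperplanes\<close>

lemma dependent_set_finite:
  "matroid E Ind \<Longrightarrow> dependent_set E Ind S \<Longrightarrow> finite S"
  unfolding matroid_def dependent_set_def by (meson finite_subset)

lemma dependent_set_contains_circuit:
  assumes "matroid E Ind" "dependent_set E Ind S"
  shows "\<exists>C\<subseteq>S. circuit E Ind C"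
proof -
  let ?A = "{C. C \<subseteq> S \<and> C \<notin> Ind}"
  have "finite ?A"
    using dependent_set_finite[OF assms] by (rule finite_subset[rotated, OF finite_Pow_iff[THEN iffD2]]) blast
  moreover have "S \<in> ?A" using assms(2) by (simp add: dependent_set_def)
  ultimately obtain C where C: "C \<in> ?A" and min: "\<forall>D\<in>?A. D \<subseteq> C \<longrightarrow> C = D"
    by (meson finite_has_minimal2)
  have "circuit E Ind C"
    unfolding circuit_def dependent_set_def
  proof (intro conjI allI impI)
    show "C \<subseteq> E" using C assms(2) by (auto simp: dependent_set_def)
    show "C \<notin> Ind" using C by simp
    fix D assume "D \<subset> C"
    with C min show "D \<in> Ind" by blast
  qed
  with C show ?thesis by blast
qed

lemma paving_small_dependent_is_circuit:
  assumes "matroid E Ind" "paving E Ind" "dependent_set E Ind S" "card S \<le> matroid_rank Ind"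
  shows "circuit E Ind S \<and> card S = matroid_rank Ind"
proof -
  obtain C where C: "C \<subseteq> S" "circuit E Ind C"
    using dependent_set_contains_circuit[OF assms(1,3)] by blast
  have "finite S" using dependent_set_finite[OF assms(1,3)] .
  moreover have "card C = matroid_rank Ind \<or> card C = matroid_rank Ind + 1"
    using assms(2) C(2) by (simp add: paving_def)
  then have "matroid_rank Ind \<le> card C" by auto
  moreover have "card C \<le> card S" using card_mono[OF \<open>finite S\<close> C(1)] .
  ultimately have "card C = card S" using assms(4) by linarith
  then have "C = S" using card_subset_eq[OF \<open>finite S\<close> C(1)] by blast
  with C \<open>matroid_rank Ind \<le> card C\<close> assms(4) show ?thesis by auto
qed

lemma circuit_subset_dependent_hyperplane:
  assumes "matroid E Ind" "circuit E Ind C" "card C = matroid_rank Ind"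
  shows "\<exists>L. dependent_hyperplane E Ind L \<and> C \<subseteq> L"
proof -
  let ?A = "{H. hyp_candidate E Ind H}"
  have "finite E" using assms(1) by (simp add: matroid_def)
  then have "finite ?A"
    by (rule finite_subset[OF _ finite_Pow_iff[THEN iffD2], rotated]) (auto simp: hyp_candidate_def)
  have "C \<subseteq> E" "finite C"
    using assms(2) \<open>finite E\<close> finite_subset unfolding circuit_def dependent_set_def by auto
  have "hyp_candidate E Ind C"
    unfolding hyp_candidate_def
  proof (intro conjI allI impI)
    fix S assume "S \<subseteq> C \<and> card S = matroid_rank Ind"
    then have "S = C" using assms(3) \<open>finite C\<close> card_subset_eq by metis
    with assms(2) show "circuit E Ind S" by simp
  qed (use \<open>C \<subseteq> E\<close> assms(3) in auto)
  then have "C \<in> ?A" by simp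
  then obtain H where "H \<in> ?A" "C \<subseteq> H" "\<forall>H'\<in>?A. H \<subseteq> H' \<longrightarrow> H = H'"
    using finite_has_maximal2[OF \<open>finite ?A\<close>] by blast
  then have "dependent_hyperplane E Ind H"
    unfolding dependent_hyperplane_def by (metis mem_Collect_eq)
  with \<open>C \<subseteq> H\<close> show ?thesis by blast
qed

lemma dependent_hyperplane_finite_card_ge:
  assumes "matroid E Ind" "dependent_hyperplane E Ind L"
  shows "finite L" "matroid_rank Ind \<le> card L"
  using assms finite_subset unfolding dependent_hyperplane_def hyp_candidate_def matroid_def by auto

lemma finite_dependent_hyperplanes:
  assumes "matroid E Ind"
  shows "finite {L. dependent_hyperplane E Ind L}"
proof (rule finite_subset)
  show "{L. dependent_hyperplane E Ind L} \<subseteq> Pow E"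
    unfolding dependent_hyperplane_def hyp_candidate_def by auto
  show "finite (Pow E)" using assms by (simp add: matroid_def)
qed

section \<open>The circuit variety of a paving matroid\<close>

lemma lin_dep_family_iff:
  fixes g :: "'a \<Rightarrow> complex ^ 'n"
  assumes "finite T"
  shows "lin_dep_family g T \<longleftrightarrow> \<not> inj_on g T \<or> vec.dependent (g ` T)"
proof (cases "inj_on g T")
  case True
  have "lin_dep_family g T \<longleftrightarrow>
        (\<exists>u. (\<exists>v\<in>g ` T. u v \<noteq> 0) \<and> (\<Sum>v\<in>g ` T. u v *s v) = 0)"
  proof
    assume "lin_dep_family g T"
    then obtain c where c: "\<exists>p\<in>T. c p \<noteq> 0" "(\<Sum>p\<in>T. c p *s g p) = 0"
      unfolding lin_dep_family_def by blast
    have "(\<Sum>v\<in>g ` T. (c \<circ> inv_into T g) v *s v) = (\<Sum>p\<in>T. c p *s g p)"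
      using True by (simp add: sum.reindex)
    with c True show "\<exists>u. (\<exists>v\<in>g ` T. u v \<noteq> 0) \<and> (\<Sum>v\<in>g ` T. u v *s v) = 0"
      by (intro exI[of _ "c \<circ> inv_into T g"]) auto
  next
    assume "\<exists>u. (\<exists>v\<in>g ` T. u v \<noteq> 0) \<and> (\<Sum>v\<in>g ` T. u v *s v) = 0"
    then obtain u where "\<exists>v\<in>g ` T. u v \<noteq> 0" "(\<Sum>v\<in>g ` T. u v *s v) = 0" by blast
    with True show "lin_dep_family g T"
      unfolding lin_dep_family_def by (intro exI[of _ "u \<circ> g"]) (auto simp: sum.reindex)
  qed
  with True assms show ?thesis by (simp add: vec.dependent_finite)
next
  case False
  then obtain p q where pq: "p \<in> T" "q \<in> T" "p \<noteq> q" "g p = g q"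
    unfolding inj_on_def by blast
  define c where "c x = (if x = p then 1 else if x = q then -1 else 0 :: complex)" for x
  have "(\<Sum>x\<in>T. c x *s g x) = (\<Sum>x\<in>{p, q}. c x *s g x)"
    using assms pq by (intro sum.mono_neutral_right) (auto simp: c_def)
  also have "\<dots> = 0" using pq by (simp add: c_def)
  finally have "lin_dep_family g T"
    unfolding lin_dep_family_def using pq(1) by (intro exI[of _ c]) (auto simp: c_def)
  with False show ?thesis by simp
qed

lemma lin_dep_family_if_dim_less_card:
  fixes g :: "'a \<Rightarrow> complex ^ 'n"
  assumes "finite T" "g ` T \<subseteq> H" "vec.dim H < card T"
  shows "lin_dep_family g T"
proof -
  have "vec.dependent (g ` T)" if "inj_on g T"
    using vec.independent_card_le_dim[OF assms(2)] card_image[OF that] assms(3) by auto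
  then show ?thesis using lin_dep_family_iff[OF assms(1)] by blast
qed

lemma le_dim_image_iff:
  fixes g :: "'a \<Rightarrow> 'k::field ^ 'n"
  shows "k \<le> vec.dim (g ` L) \<longleftrightarrow> (\<exists>S\<subseteq>L. card S = k \<and> inj_on g S \<and> vec.independent (g ` S))"
proof
  assume k: "k \<le> vec.dim (g ` L)"
  obtain B where B: "B \<subseteq> g ` L" "vec.independent B" "g ` L \<subseteq> vec.span B" "card B = vec.dim (g ` L)"
    by (rule vec.basis_exists)
  have "k \<le> card B" using k B(4) by simp
  then obtain B' where B': "B' \<subseteq> B" "card B' = k" "finite B'"
    by (rule obtain_subset_with_card_n)
  have "B' \<subseteq> g ` L" using B(1) B'(1) by blast
  then obtain S where S: "S \<subseteq> L" "inj_on g S" "B' = g ` S"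
    unfolding subset_image_inj by blast
  have "card S = k" using card_image[OF S(2)] S(3) B'(2) by simp
  moreover have "vec.independent (g ` S)" using vec.independent_mono[OF B(2)] B'(1) S(3) by blast
  ultimately show "\<exists>S\<subseteq>L. card S = k \<and> inj_on g S \<and> vec.independent (g ` S)" using S by blast
next
  assume "\<exists>S\<subseteq>L. card S = k \<and> inj_on g S \<and> vec.independent (g ` S)"
  then obtain S where S: "S \<subseteq> L" "card S = k" "inj_on g S" "vec.independent (g ` S)" by blast
  have "card (g ` S) \<le> vec.dim (g ` L)"
    using S(1,4) by (intro vec.independent_card_le_dim) auto
  with S(2,3) show "k \<le> vec.dim (g ` L)" by (simp add: card_image)
qed

lemma circuit_variety_iff_dim_hyperplanes:
  fixes \<gamma> :: "'a \<Rightarrow> complex ^ 'n"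
  assumes M: "matroid E Ind" and P: "paving E Ind" and R: "matroid_rank Ind = CARD('n)"
  shows "\<gamma> \<in> circuit_variety E Ind \<longleftrightarrow>
         (\<forall>L. dependent_hyperplane E Ind L \<longrightarrow> vec.dim (\<gamma> ` L) \<le> CARD('n) - 1)"
proof (intro iffI allI impI)
  fix L assume \<gamma>: "\<gamma> \<in> circuit_variety E Ind" and L: "dependent_hyperplane E Ind L"
  show "vec.dim (\<gamma> ` L) \<le> CARD('n) - 1"
  proof (rule ccontr)
    assume "\<not> ?thesis"
    then obtain S where S: "S \<subseteq> L" "card S = CARD('n)" "inj_on \<gamma> S" "vec.independent (\<gamma> ` S)"
      using le_dim_image_iff[of "CARD('n)" \<gamma> L] by auto
    have "finite S" using S(2) by (simp add: card_ge_0_finite)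
    have "dependent_set E Ind S"
      using L S(1,2) R unfolding dependent_hyperplane_def hyp_candidate_def circuit_def by auto
    then have "lin_dep_family \<gamma> S" using \<gamma> by (simp add: circuit_variety_def)
    with S(3,4) show False using lin_dep_family_iff[OF \<open>finite S\<close>] by blast
  qed
next
  assume dims: "\<forall>L. dependent_hyperplane E Ind L \<longrightarrow> vec.dim (\<gamma> ` L) \<le> CARD('n) - 1"
  show "\<gamma> \<in> circuit_variety E Ind"
    unfolding circuit_variety_def
  proof (intro CollectI allI impI)
    fix T assume T: "dependent_set E Ind T"
    have "finite T" using dependent_set_finite[OF M T] .
    show "lin_dep_family \<gamma> T"
    proof (cases "CARD('n) < card T")
      case True
      with \<open>finite T\<close> show ?thesis
        by (intro lin_dep_family_if_dim_less_card[of T \<gamma> UNIV]) (simp_all add: card_cart_basis)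
    next
      case False
      then have "circuit E Ind T" "card T = CARD('n)"
        using paving_small_dependent_is_circuit[OF M P T] R by auto
      then obtain L where L: "dependent_hyperplane E Ind L" "T \<subseteq> L"
        using circuit_subset_dependent_hyperplane[OF M] R by metis
      have "vec.dim (\<gamma> ` L) \<le> CARD('n) - 1" using dims L(1) by blast
      moreover have "0 < CARD('n)" by simp
      ultimately have "vec.dim (\<gamma> ` L) < card T" using \<open>card T = CARD('n)\<close> by linarith
      with L(2) \<open>finite T\<close> show ?thesis by (intro lin_dep_family_if_dim_less_card) auto
    qed
  qed
qed

lemma subspace_of_dim_containing:
  fixes X :: "('k::field ^ 'n) set"
  assumes "vec.dim X \<le> k" "k \<le> CARD('n)"
  shows "\<exists>H. vec.subspace H \<and> vec.dim H = k \<and> X \<subseteq> H"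
proof -
  obtain B where B: "B \<subseteq> X" "vec.independent B" "X \<subseteq> vec.span B" "card B = vec.dim X"
    by (rule vec.basis_exists)
  obtain C where C: "B \<subseteq> C" "vec.independent C" "UNIV \<subseteq> vec.span C"
    by (rule vec.maximal_independent_subset_extend[OF subset_UNIV B(2)])
  have "card C = CARD('n)"
    using vec.basis_card_eq_dim[OF subset_UNIV C(3) C(2)] by (simp add: card_cart_basis)
  then obtain D where D: "B \<subseteq> D" "D \<subseteq> C" "card D = k"
    using exists_subset_between[of B k C] assms B(4) C(1) vec.finiteI_independent[OF C(2)] by auto
  have "vec.independent D" using vec.independent_mono[OF C(2) D(2)] .
  then have "vec.dim (vec.span D) = k" using D(3) by (simp add: vec.dim_eq_card_independent)
  moreover have "X \<subseteq> vec.span D" using B(3) vec.span_mono[OF D(1)] by blast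
  ultimately show ?thesis by (intro exI[of _ "vec.span D"]) simp
qed

lemma dim_add_le_dim_Int:
  fixes A B :: "('k::field ^ 'n) set"
  assumes "vec.subspace A" "vec.subspace B"
  shows "vec.dim A + vec.dim B \<le> CARD('n) + vec.dim (A \<inter> B)"
proof -
  have "vec.dim {x + y |x y. x \<in> A \<and> y \<in> B} \<le> CARD('n)"
    using vec.dim_subset[of _ UNIV] by (simp add: card_cart_basis)
  then show ?thesis using vec.dim_sums_Int[OF assms] by linarith
qed

section \<open>Avoiding finitely many proper subspaces\<close>

lemma scaleR_eq_vec_scale: "r *\<^sub>R x = complex_of_real r *s (x :: complex ^ 'n)"
  by (simp add: vec_eq_iff scaleR_conv_of_real[where 'a=complex])

lemma line_meets_subspace_at_most_once:
  fixes a b :: "'k::field ^ 'n"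
  assumes "vec.subspace V" "\<not> (a \<in> V \<and> b \<in> V)" "a + s *s b \<in> V" "a + t *s b \<in> V"
  shows "s = t"
proof (rule ccontr)
  assume "s \<noteq> t"
  have "(a + s *s b) - (a + t *s b) \<in> V" using vec.subspace_diff[OF assms(1,3,4)] .
  then have "(s - t) *s b \<in> V" by (simp add: vector_sub_rdistrib)
  then have "inverse (s - t) *s ((s - t) *s b) \<in> V" using vec.subspace_scale[OF assms(1)] by blast
  moreover have "inverse (s - t) *s ((s - t) *s b) = b"
    unfolding vector_smult_assoc using \<open>s \<noteq> t\<close> by simp
  ultimately have "b \<in> V" by simp
  then have "(a + s *s b) - s *s b \<in> V"
    using vec.subspace_diff[OF assms(1,3) vec.subspace_scale[OF assms(1)]] by blast
  with \<open>b \<in> V\<close> assms(2) show False by simp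
qed

lemma exists_small_scalar_avoiding_subspaces:
  fixes a b :: "complex ^ 'n"
  assumes "finite Vs" "\<forall>V\<in>Vs. vec.subspace V \<and> \<not> (a \<in> V \<and> b \<in> V)" "0 < r"
  shows "\<exists>s\<in>{0<..<r}. \<forall>V\<in>Vs. a + s *\<^sub>R b \<notin> V"
proof -
  have "finite {s. a + s *\<^sub>R b \<in> V}" if "V \<in> Vs" for V
  proof (cases "{s. a + s *\<^sub>R b \<in> V} = {}")
    case False
    then obtain s0 where s0: "a + s0 *\<^sub>R b \<in> V" by blast
    have "s = s0" if "a + s *\<^sub>R b \<in> V" for s
    proof -
      have "V \<in> Vs" by fact
      then have "complex_of_real s = complex_of_real s0"
        using assms(2) line_meets_subspace_at_most_once[of V a b]
          that[unfolded scaleR_eq_vec_scale] s0[unfolded scaleR_eq_vec_scale] by blast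
      then show ?thesis by simp
    qed
    then have "{s. a + s *\<^sub>R b \<in> V} \<subseteq> {s0}" by blast
    then show ?thesis using finite_subset by blast
  qed simp
  then have "finite (\<Union>V\<in>Vs. {s. a + s *\<^sub>R b \<in> V})" using assms(1) by blast
  moreover have "infinite {0<..<r}" using assms(3) by simp
  ultimately have "\<not> {0<..<r} \<subseteq> (\<Union>V\<in>Vs. {s. a + s *\<^sub>R b \<in> V})"
    using finite_subset by blast
  then show ?thesis by blast
qed

lemma exists_vector_avoiding_subspaces:
  fixes W :: "(complex ^ 'n) set"
  assumes "finite Vs" "\<forall>V\<in>Vs. vec.subspace V \<and> \<not> W \<subseteq> V" "vec.subspace W"
  shows "\<exists>y\<in>W. \<forall>V\<in>Vs. y \<notin> V"
  using assms(1,2)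
proof (induction Vs rule: finite_induct)
  case empty
  then show ?case using vec.subspace_0[OF assms(3)] by blast
next
  case (insert V Vs)
  then obtain y where y: "y \<in> W" "\<forall>V'\<in>Vs. y \<notin> V'" by blast
  obtain w where w: "w \<in> W" "w \<notin> V" using insert.prems by blast
  obtain s where "\<forall>V'\<in>insert V Vs. y + s *\<^sub>R w \<notin> V'"
    using exists_small_scalar_avoiding_subspaces[of "insert V Vs" y w 1] insert y w by auto
  moreover have "y + s *\<^sub>R w \<in> W"
    using vec.subspace_add[OF assms(3) y(1) vec.subspace_scale[OF assms(3) w(1)]]
    by (simp add: scaleR_eq_vec_scale)
  ultimately show ?case by blast
qed

lemma exists_near_vector_avoiding_subspaces:
  fixes W :: "(complex ^ 'n) set"
  assumes "finite Vs" "\<forall>V\<in>Vs. vec.subspace V \<and> \<not> W \<subseteq> V" "vec.subspace W" "x \<in> W" "0 < \<delta>"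
  shows "\<exists>y\<in>W. norm (y - x) < \<delta> \<and> (\<forall>V\<in>Vs. y \<notin> V)"
proof -
  obtain z where z: "z \<in> W" "\<forall>V\<in>Vs. z \<notin> V"
    using exists_vector_avoiding_subspaces[OF assms(1-3)] by blast
  have "\<forall>V\<in>Vs. vec.subspace V \<and> \<not> (x \<in> V \<and> z - x \<in> V)"
    using z(2) assms(2) vec.subspace_add by fastforce
  moreover define r where "r = \<delta> / (norm (z - x) + 1)"
  moreover have "0 < norm (z - x) + 1" using norm_ge_zero[of "z - x"] by linarith
  ultimately obtain s where s: "s \<in> {0<..<r}" "\<forall>V\<in>Vs. x + s *\<^sub>R (z - x) \<notin> V"
    using exists_small_scalar_avoiding_subspaces[OF assms(1)] assms(5) by (metis divide_pos_pos)
  have "x + s *\<^sub>R (z - x) \<in> W"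
    using vec.subspace_add[OF assms(3,4) vec.subspace_scale[OF assms(3) vec.subspace_diff[OF assms(3) z(1) assms(4)]]]
    by (simp add: scaleR_eq_vec_scale)
  moreover have "norm (s *\<^sub>R (z - x)) < \<delta>"
  proof -
    have "norm (s *\<^sub>R (z - x)) \<le> s * (norm (z - x) + 1)" using s(1) by simp
    also have "\<dots> < \<delta>"
      using s(1) \<open>0 < norm (z - x) + 1\<close> by (simp add: r_def pos_less_divide_eq)
    finally show ?thesis .
  qed
  ultimately show ?thesis using s(2) by (intro bexI[of _ "x + s *\<^sub>R (z - x)"]) auto
qed

section \<open>Perturbing one point at a time\<close>

lemma independent_image_not_in_span_others:
  fixes g :: "'a \<Rightarrow> 'k::field ^ 'n"
  assumes "inj_on g S" "vec.independent (g ` S)" "q \<in> S"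
  shows "g q \<notin> vec.span (g ` (S - {q}))"
proof -
  have "g ` (S - {q}) = g ` S - {g q}" using assms(1,3) by (auto simp: inj_on_def)
  with assms(2,3) show ?thesis unfolding vec.dependent_def by auto
qed

lemma independent_image_fun_upd:
  fixes g :: "'a \<Rightarrow> 'k::field ^ 'n"
  assumes "inj_on g S" "vec.independent (g ` S)" "q \<in> S" "y \<notin> vec.span (g ` (S - {q}))"
  shows "inj_on (g(q := y)) S \<and> vec.independent (g(q := y) ` S)"
proof
  have image: "g(q := y) ` S = insert y (g ` (S - {q}))" using assms(3) by auto
  have "vec.independent (g ` (S - {q}))"
    by (rule vec.independent_mono[OF assms(2)]) blast
  then show "vec.independent (g(q := y) ` S)"
    unfolding image by (rule vec.independent_insertI[OF assms(4)])
  have "y \<notin> g ` (S - {q})" using assms(4) vec.span_base[of y "g ` (S - {q})"] by metis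
  with assms(1,3) show "inj_on (g(q := y)) S"
    by (auto simp: inj_on_def)
qed

lemma exists_point_perturbation_preserving_dims:
  fixes g :: "'a \<Rightarrow> complex ^ 'n"
  assumes W: "vec.subspace W" "g q \<in> W"
    and F: "finite F" "\<forall>L\<in>F. m \<le> vec.dim (g ` L)"
    and Vs: "finite Vs" "\<forall>V\<in>Vs. vec.subspace V \<and> \<not> W \<subseteq> V"
    and "0 < \<delta>"
  shows "\<exists>y\<in>W. norm (y - g q) < \<delta> \<and> (\<forall>V\<in>Vs. y \<notin> V) \<and> (\<forall>L\<in>F. m \<le> vec.dim (g(q := y) ` L))"
proof -
  obtain S where S: "\<forall>L\<in>F. S L \<subseteq> L \<and> card (S L) = m \<and> inj_on g (S L) \<and> vec.independent (g ` S L)"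
    using F(2) unfolding le_dim_image_iff by metis
  \<comment> \<open>keeping \<open>y\<close> off the span of the other vectors of each witness \<open>S L\<close> keeps it independent\<close>
  define Vs' where "Vs' = Vs \<union> (\<lambda>L. vec.span (g ` (S L - {q}))) ` {L\<in>F. q \<in> S L}"
  have "finite Vs'" unfolding Vs'_def using F(1) Vs(1) by simp
  moreover have "\<forall>V\<in>Vs'. vec.subspace V \<and> \<not> W \<subseteq> V"
    unfolding Vs'_def using Vs(2) W(2) S independent_image_not_in_span_others by fastforce
  ultimately obtain y where y: "y \<in> W" "norm (y - g q) < \<delta>" "\<forall>V\<in>Vs'. y \<notin> V"
    using exists_near_vector_avoiding_subspaces[OF _ _ W \<open>0 < \<delta>\<close>] by blast
  have "m \<le> vec.dim (g(q := y) ` L)" if "L \<in> F" for L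
  proof (cases "q \<in> S L")
    case True
    then have "y \<notin> vec.span (g ` (S L - {q}))" using y(3) that unfolding Vs'_def by blast
    then show ?thesis
      using independent_image_fun_upd[of g "S L" q y] S that True
      unfolding le_dim_image_iff by blast
  next
    case False
    then have "g(q := y) ` S L = g ` S L" "inj_on (g(q := y)) (S L) = inj_on g (S L)"
      by (auto intro!: inj_on_cong)
    then show ?thesis using S that unfolding le_dim_image_iff by metis
  qed
  with y show ?thesis unfolding Vs'_def by blast
qed

lemma exists_perturbation_independent_along_list:
  fixes g :: "'a \<Rightarrow> complex ^ 'n" and W :: "'a \<Rightarrow> (complex ^ 'n) set"
  assumes "\<forall>p. vec.subspace (W p)" "\<forall>p. g p \<in> W p"
    and "finite F" "\<forall>L\<in>F. m \<le> vec.dim (g ` L)"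
    and "finite S" "inj_on g S" "vec.independent (g ` S)"
    and "distinct qs" "set qs \<inter> S = {}"
    \<comment> \<open>before moving \<open>qs ! i\<close>, the vectors placed so far span a subspace of dimension
        \<open>card S + i\<close> containing \<open>g ` S\<close>; \<open>W (qs ! i)\<close> must not be trapped in it\<close>
    and "\<And>i V. i < length qs \<Longrightarrow> vec.subspace V \<Longrightarrow> vec.dim V \<le> card S + i \<Longrightarrow> g ` S \<subseteq> V
           \<Longrightarrow> \<not> W (qs ! i) \<subseteq> V"
    and "0 < \<delta>"
  shows "\<exists>g'. (\<forall>p. g' p \<in> W p) \<and> (\<forall>p. norm (g' p - g p) < \<delta>) \<and> (\<forall>L\<in>F. m \<le> vec.dim (g' ` L))
              \<and> inj_on g' (S \<union> set qs) \<and> vec.independent (g' ` (S \<union> set qs))"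
  using assms(2,4-)
proof (induction qs arbitrary: g S \<delta>)
  case Nil
  then show ?case by (intro exI[of _ g]) auto
next
  case (Cons q qs)
  note W = assms(1) Cons.prems(1) and room = Cons.prems(8)
  have "vec.dim (vec.span (g ` S)) \<le> card S"
    using Cons.prems(4,5) by (simp add: vec.dim_eq_card_independent card_image)
  then have "\<not> W q \<subseteq> vec.span (g ` S)"
    using room[of 0 "vec.span (g ` S)"] by (auto intro: vec.span_base)
  then obtain y where y: "y \<in> W q" "norm (y - g q) < \<delta> / 2" "y \<notin> vec.span (g ` S)"
      "\<forall>L\<in>F. m \<le> vec.dim (g(q := y) ` L)"
    using exists_point_perturbation_preserving_dims[of "W q" g q F m "{vec.span (g ` S)}" "\<delta> / 2"]
      W assms(3) Cons.prems(2,9) by auto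
  define g1 where "g1 = g(q := y)"
  have "q \<notin> S" using Cons.prems(7) by auto
  then have g1_S: "g1 ` S = g ` S" "inj_on g1 S = inj_on g S"
    unfolding g1_def by (auto intro!: inj_on_cong)
  have "g1 q = y" by (simp add: g1_def)
  with g1_S(1) have image: "g1 ` insert q S = insert y (g ` S)" by (simp only: image_insert)
  have "y \<notin> g ` S" using y(3) vec.span_base[of y "g ` S"] by metis
  with g1_S \<open>g1 q = y\<close> \<open>q \<notin> S\<close> Cons.prems(4) have "inj_on g1 (insert q S)" by simp
  moreover have "vec.independent (g1 ` insert q S)"
    unfolding image by (rule vec.independent_insertI[OF y(3) Cons.prems(5)])
  moreover have "\<not> W (qs ! i) \<subseteq> V"
    if "i < length qs" "vec.subspace V" "vec.dim V \<le> card (insert q S) + i" "g1 ` insert q S \<subseteq> V" for i V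
    using room[of "Suc i" V] that g1_S(1) Cons.prems(3) \<open>q \<notin> S\<close> by auto
  moreover have "\<forall>p. g1 p \<in> W p" using Cons.prems(1) y(1) by (simp add: g1_def)
  moreover have "\<forall>L\<in>F. m \<le> vec.dim (g1 ` L)" unfolding g1_def by (rule y(4))
  moreover have "finite (insert q S)" "distinct qs" "set qs \<inter> insert q S = {}" "0 < \<delta> / 2"
    using Cons.prems(3,6,7,9) by auto
  ultimately obtain g' where g': "\<forall>p. g' p \<in> W p" "\<forall>p. norm (g' p - g1 p) < \<delta> / 2"
      "\<forall>L\<in>F. m \<le> vec.dim (g' ` L)" "inj_on g' (insert q S \<union> set qs)"
      "vec.independent (g' ` (insert q S \<union> set qs))"
    using Cons.IH[of g1 "insert q S" "\<delta> / 2"] by blast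
  have "norm (g1 p - g p) < \<delta> / 2" for p using y(2) Cons.prems(9) by (simp add: g1_def)
  then have "norm (g' p - g p) < \<delta>" for p
    using norm_diff_triangle_less[OF g'(2)[rule_format]] by (metis field_sum_of_halves)
  with g' show ?case by (intro exI[of _ g']) auto
qed

lemma exists_perturbation_dim_image_ge_if_wide_point:
  fixes g :: "'a \<Rightarrow> complex ^ 'n" and W :: "'a \<Rightarrow> (complex ^ 'n) set"
  assumes W: "\<forall>p. vec.subspace (W p)" "\<forall>p. g p \<in> W p"
    and F: "finite F" "\<forall>L'\<in>F. m \<le> vec.dim (g ` L')"
    and L: "finite L" "m \<le> card L" "q0 \<in> L" "m \<le> vec.dim (W q0)" "\<forall>q\<in>L. m - 1 \<le> vec.dim (W q)"
    and "0 < m" "0 < \<delta>"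
  shows "\<exists>g'. (\<forall>p. g' p \<in> W p) \<and> (\<forall>p. norm (g' p - g p) < \<delta>) \<and> (\<forall>L'\<in>F. m \<le> vec.dim (g' ` L'))
              \<and> m \<le> vec.dim (g' ` L)"
proof -
  have "m - 1 \<le> card (L - {q0})" using L(1-3) by simp
  then obtain R where R: "R \<subseteq> L - {q0}" "card R = m - 1" "finite R"
    by (rule obtain_subset_with_card_n)
  obtain xs where xs: "set xs = R" "distinct xs" using finite_distinct_list[OF R(3)] by blast
  have "length xs = m - 1" using xs R(2) distinct_card by fastforce
  let ?qs = "xs @ [q0]"
  have qs: "distinct ?qs" "set ?qs \<subseteq> L" "length ?qs = m"
    using xs R(1) L(3) \<open>length xs = m - 1\<close> \<open>0 < m\<close> by auto
  have "i < vec.dim (W (?qs ! i))" if "i < length ?qs" for i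
  proof (cases "i < length xs")
    case True
    then have "xs ! i \<in> L" using xs R(1) nth_mem by blast
    with True show ?thesis using L(5) \<open>length xs = m - 1\<close> by (fastforce simp: nth_append)
  next
    case False
    with that show ?thesis using L(4) \<open>length xs = m - 1\<close> \<open>0 < m\<close> by (simp add: nth_append)
  qed
  then have room: "\<not> W (?qs ! i) \<subseteq> V"
    if "i < length ?qs" "vec.subspace V" "vec.dim V \<le> card {} + i" "g ` {} \<subseteq> V" for i V
    using that vec.dim_subset[of "W (?qs ! i)" V] by fastforce
  have "vec.independent (g ` {})" "set ?qs \<inter> {} = {}" by (simp_all add: vec.independent_empty)
  from exists_perturbation_independent_along_list[OF W F finite.emptyI inj_on_empty this(1) qs(1)
      this(2) room \<open>0 < \<delta>\<close>]
  obtain g' where g': "\<forall>p. g' p \<in> W p" "\<forall>p. norm (g' p - g p) < \<delta>"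
      "\<forall>L'\<in>F. m \<le> vec.dim (g' ` L')" "inj_on g' (set ?qs)" "vec.independent (g' ` set ?qs)"
    by auto
  have "m \<le> vec.dim (g' ` L)"
    unfolding le_dim_image_iff using qs g'(4,5) distinct_card by metis
  with g' show ?thesis by blast
qed

lemma exists_perturbation_dim_image_ge_if_incomparable_points:
  fixes g :: "'a \<Rightarrow> complex ^ 'n" and W :: "'a \<Rightarrow> (complex ^ 'n) set"
  assumes W: "\<forall>p. vec.subspace (W p)" "\<forall>p. g p \<in> W p"
    and F: "finite F" "\<forall>L'\<in>F. m \<le> vec.dim (g ` L')"
    and L: "finite L" "m \<le> card L" "q1 \<in> L" "q2 \<in> L" "\<not> W q1 \<subseteq> W q2" "\<forall>q\<in>L. m - 1 \<le> vec.dim (W q)"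
    and "0 < m" "0 < \<delta>"
  shows "\<exists>g'. (\<forall>p. g' p \<in> W p) \<and> (\<forall>p. norm (g' p - g p) < \<delta>) \<and> (\<forall>L'\<in>F. m \<le> vec.dim (g' ` L'))
              \<and> m \<le> vec.dim (g' ` L)"
proof -
  obtain y where y: "y \<in> W q1" "norm (y - g q1) < \<delta> / 2" "y \<notin> W q2"
      "\<forall>L'\<in>F. m \<le> vec.dim (g(q1 := y) ` L')"
    using exists_point_perturbation_preserving_dims[of "W q1" g q1 F m "{W q2}" "\<delta> / 2"] W F L(5) \<open>0 < \<delta>\<close>
    by auto
  define g1 where "g1 = g(q1 := y)"
  have "y \<noteq> 0" using y(3) vec.subspace_0 W(1) by metis
  have "q1 \<noteq> q2" using L(5) by blast
  then have "m - 2 \<le> card (L - {q1, q2})" using L(1-4) by (simp add: card_Diff_subset)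
  then obtain R where R: "R \<subseteq> L - {q1, q2}" "card R = m - 2" "finite R"
    by (rule obtain_subset_with_card_n)
  obtain xs where xs: "set xs = R" "distinct xs" using finite_distinct_list[OF R(3)] by blast
  have "length xs = m - 2" using xs R(2) distinct_card by fastforce
  \<comment> \<open>\<open>take\<close> drops \<open>q2\<close> when \<open>m = 1\<close>; then moving \<open>q1\<close> alone already gives rank 1.\<close>
  define qs where "qs = take (m - 1) (xs @ [q2])"
  have "distinct (xs @ [q2])" "set (xs @ [q2]) \<subseteq> L - {q1}"
    using xs R(1) L(4) \<open>q1 \<noteq> q2\<close> by auto
  then have qs: "distinct qs" "set qs \<inter> {q1} = {}" "set qs \<subseteq> L" "length qs = m - 1"
    using set_take_subset[of "m - 1" "xs @ [q2]"] \<open>length xs = m - 2\<close> unfolding qs_def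
    by (blast intro: distinct_take, blast, blast, simp)
  have "\<not> W (qs ! i) \<subseteq> V"
    if i: "i < length qs" and V: "vec.subspace V" "vec.dim V \<le> card {q1} + i" "g1 ` {q1} \<subseteq> V" for i V
  proof (cases "i < length xs")
    case True
    then have "xs ! i \<in> L" using xs R(1) nth_mem by blast
    then have "vec.dim V < vec.dim (W (qs ! i))"
      using True V(2) L(6) \<open>length xs = m - 2\<close> i qs(4) by (fastforce simp: qs_def nth_append)
    then show ?thesis using vec.dim_subset by (meson leD)
  next
    case False
    then have "qs ! i = q2" using i qs(4) \<open>length xs = m - 2\<close> by (simp add: qs_def nth_append)
    moreover have "y \<in> V" using V(3) by (simp add: g1_def)
    moreover have "vec.dim V \<le> vec.dim (W q2)" using V(2) L(4,6) i qs(4) by fastforce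
    ultimately show ?thesis using vec.subspace_dim_equal[OF W(1)[rule_format] V(1)] y(3) by blast
  qed
  moreover have "\<forall>p. g1 p \<in> W p" using W(2) y(1) by (simp add: g1_def)
  moreover have "\<forall>L'\<in>F. m \<le> vec.dim (g1 ` L')" unfolding g1_def by (rule y(4))
  moreover have "vec.independent (g1 ` {q1})" using \<open>y \<noteq> 0\<close> by (simp add: g1_def)
  ultimately obtain g' where g': "\<forall>p. g' p \<in> W p" "\<forall>p. norm (g' p - g1 p) < \<delta> / 2"
      "\<forall>L'\<in>F. m \<le> vec.dim (g' ` L')" "inj_on g' ({q1} \<union> set qs)"
      "vec.independent (g' ` ({q1} \<union> set qs))"
    using exists_perturbation_independent_along_list[OF W(1) _ F(1), of g1 m "{q1}" qs "\<delta> / 2"]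
      qs(1,2) \<open>0 < \<delta>\<close> by auto
  have "norm (g1 p - g p) < \<delta> / 2" for p using y(2) \<open>0 < \<delta>\<close> by (simp add: g1_def)
  then have "norm (g' p - g p) < \<delta>" for p
    using norm_diff_triangle_less[OF g'(2)[rule_format]] by (metis field_sum_of_halves)
  moreover have "card ({q1} \<union> set qs) = m"
    using qs(2,4) distinct_card[OF qs(1)] \<open>0 < m\<close> by simp
  then have "m \<le> vec.dim (g' ` L)"
    unfolding le_dim_image_iff using qs(3) L(3) g'(4,5) by (intro exI[of _ "{q1} \<union> set qs"]) auto
  ultimately show ?thesis using g'(1,3) by blast
qed

section \<open>Hyperplanes adapted to a configuration\<close>

definition incident_Inter :: "'a set \<Rightarrow> 'a set set \<Rightarrow> ('a set \<Rightarrow> 'b set) \<Rightarrow> 'a \<Rightarrow> 'b set" where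
  "incident_Inter E Ind H q = (\<Inter>L\<in>{L. dependent_hyperplane E Ind L \<and> q \<in> L}. H L)"

lemma mem_incident_Inter_iff:
  "v \<in> incident_Inter E Ind H q \<longleftrightarrow> (\<forall>L. dependent_hyperplane E Ind L \<and> q \<in> L \<longrightarrow> v \<in> H L)"
  by (auto simp: incident_Inter_def)

lemma subspace_incident_Inter:
  assumes "\<forall>L. dependent_hyperplane E Ind L \<longrightarrow> vec.subspace (H L)"
  shows "vec.subspace (incident_Inter E Ind H q)"
  unfolding incident_Inter_def using assms by (intro vec.subspace_Int) blast

lemma tame_incident_hyperplanes:
  assumes "tame E Ind" "dependent_hyperplane E Ind L" "q \<in> L"
  obtains L' where "dependent_hyperplane E Ind L'" "q \<in> L'"
    "{L''. dependent_hyperplane E Ind L'' \<and> q \<in> L''} = {L, L'}"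
proof (cases "\<exists>L'. dependent_hyperplane E Ind L' \<and> q \<in> L' \<and> L' \<noteq> L")
  case True
  then obtain L' where L': "dependent_hyperplane E Ind L'" "q \<in> L'" "L' \<noteq> L" by blast
  have "L'' = L \<or> L'' = L'" if "dependent_hyperplane E Ind L''" "q \<in> L''" for L''
    using assms L' that unfolding tame_def by blast
  with L' assms(2,3) show thesis by (intro that[OF L'(1,2)]) blast
next
  case False
  with assms(2,3) show thesis by (intro that[OF assms(2,3)]) blast
qed

lemma dim_incident_Inter_ge:
  fixes H :: "'a set \<Rightarrow> ('k::field ^ 'n) set"
  assumes "tame E Ind" "dependent_hyperplane E Ind L" "q \<in> L"
    and "\<forall>L'. dependent_hyperplane E Ind L' \<longrightarrow> vec.subspace (H L') \<and> vec.dim (H L') = CARD('n) - 1"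
  shows "CARD('n) - 2 \<le> vec.dim (incident_Inter E Ind H q)"
proof -
  obtain L' where L': "dependent_hyperplane E Ind L'" "q \<in> L'"
    "{L''. dependent_hyperplane E Ind L'' \<and> q \<in> L''} = {L, L'}"
    by (rule tame_incident_hyperplanes[OF assms(1-3)])
  then have "incident_Inter E Ind H q = H L \<inter> H L'" by (simp add: incident_Inter_def)
  moreover have "vec.subspace (H L)" "vec.dim (H L) = CARD('n) - 1"
    "vec.subspace (H L')" "vec.dim (H L') = CARD('n) - 1"
    using assms(2,4) L'(1) by blast+
  then have "CARD('n) - 2 \<le> vec.dim (H L \<inter> H L')"
    using dim_add_le_dim_Int[of "H L" "H L'"] by linarith
  ultimately show ?thesis by simp
qed

lemma circuit_variety_if_incident:
  fixes g :: "'a \<Rightarrow> complex ^ 'n"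
  assumes "matroid E Ind" "paving E Ind" "matroid_rank Ind = CARD('n)"
    and "\<forall>L. dependent_hyperplane E Ind L \<longrightarrow> vec.dim (H L) \<le> CARD('n) - 1"
    and "\<forall>p. g p \<in> incident_Inter E Ind H p"
  shows "g \<in> circuit_variety E Ind"
proof -
  have "vec.dim (g ` L) \<le> CARD('n) - 1" if "dependent_hyperplane E Ind L" for L
  proof -
    have "g ` L \<subseteq> H L" using assms(5) that by (auto simp: mem_incident_Inter_iff)
    then show ?thesis using vec.dim_subset assms(4) that le_trans by blast
  qed
  then show ?thesis using circuit_variety_iff_dim_hyperplanes[OF assms(1-3)] by blast
qed

lemma exists_adapted_hyperplanes:
  fixes \<gamma> :: "'a \<Rightarrow> complex ^ 'n"
  assumes T: "tame E Ind"
    and dims: "\<forall>L'. dependent_hyperplane E Ind L' \<longrightarrow> vec.dim (\<gamma> ` L') \<le> CARD('n) - 1"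
    and L: "dependent_hyperplane E Ind L" "L \<noteq> {}"
  shows "\<exists>H. (\<forall>L'. dependent_hyperplane E Ind L' \<longrightarrow>
                 vec.subspace (H L') \<and> vec.dim (H L') = CARD('n) - 1 \<and> \<gamma> ` L' \<subseteq> H L')
           \<and> ((\<exists>q0\<in>L. CARD('n) - 1 \<le> vec.dim (incident_Inter E Ind H q0))
              \<or> (\<exists>q1\<in>L. \<exists>q2\<in>L. \<not> incident_Inter E Ind H q1 \<subseteq> incident_Inter E Ind H q2))"
proof -
  have "\<exists>H. vec.subspace H \<and> vec.dim H = CARD('n) - 1 \<and> \<gamma> ` L' \<subseteq> H"
    if "dependent_hyperplane E Ind L'" for L'
    using subspace_of_dim_containing[of "\<gamma> ` L'" "CARD('n) - 1"] dims that by simp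
  then obtain base where base: "\<forall>L'. dependent_hyperplane E Ind L' \<longrightarrow>
      vec.subspace (base L') \<and> vec.dim (base L') = CARD('n) - 1 \<and> \<gamma> ` L' \<subseteq> base L'"
    by metis
  show ?thesis
  proof (cases "\<exists>q0\<in>L. \<exists>H0. vec.subspace H0 \<and> vec.dim H0 = CARD('n) - 1 \<and>
                  (\<forall>L'. dependent_hyperplane E Ind L' \<and> q0 \<in> L' \<longrightarrow> \<gamma> ` L' \<subseteq> H0)")
    case True
    then obtain q0 H0 where q0: "q0 \<in> L" and H0: "vec.subspace H0" "vec.dim H0 = CARD('n) - 1"
      "\<forall>L'. dependent_hyperplane E Ind L' \<and> q0 \<in> L' \<longrightarrow> \<gamma> ` L' \<subseteq> H0"
      by blast
    define H where "H L' = (if q0 \<in> L' then H0 else base L')" for L'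
    have "incident_Inter E Ind H q0 = H0" using L(1) q0 by (auto simp: incident_Inter_def H_def)
    moreover have "\<forall>L'. dependent_hyperplane E Ind L' \<longrightarrow>
        vec.subspace (H L') \<and> vec.dim (H L') = CARD('n) - 1 \<and> \<gamma> ` L' \<subseteq> H L'"
      using base H0 by (simp add: H_def)
    ultimately show ?thesis using q0 H0(2) by (metis order_refl)
  next
    case False
    have "\<exists>q1\<in>L. \<exists>q2\<in>L. \<not> incident_Inter E Ind base q1 \<subseteq> incident_Inter E Ind base q2"
    proof (rule ccontr)
      assume "\<not> ?thesis"
      then have all: "incident_Inter E Ind base p \<subseteq> incident_Inter E Ind base q" if "p \<in> L" "q \<in> L" for p q
        using that by blast
      obtain q where q: "q \<in> L" using L(2) by blast
      obtain L0 where L0: "dependent_hyperplane E Ind L0" "q \<in> L0"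
        "{L''. dependent_hyperplane E Ind L'' \<and> q \<in> L''} = {L, L0}"
        by (rule tame_incident_hyperplanes[OF T L(1) q])
      \<comment> \<open>all points of \<open>L\<close> are then sent into \<open>base L0\<close>, so \<open>q\<close> satisfies the case hypothesis\<close>
      have "\<gamma> p \<in> base L0" if "p \<in> L" for p
      proof -
        have "\<gamma> p \<in> incident_Inter E Ind base p" using base by (auto simp: mem_incident_Inter_iff)
        then have "\<gamma> p \<in> incident_Inter E Ind base q" using all[OF that q] by blast
        with L0(1,2) show ?thesis by (simp add: mem_incident_Inter_iff)
      qed
      then have "\<gamma> ` L' \<subseteq> base L0" if "dependent_hyperplane E Ind L'" "q \<in> L'" for L'
      proof -
        have "L' \<in> {L, L0}" using L0(3) that by (metis (mono_tags) mem_Collect_eq)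
        with base that \<open>\<And>p. p \<in> L \<Longrightarrow> \<gamma> p \<in> base L0\<close> show ?thesis by auto
      qed
      with False q base[rule_format, OF L0(1)] show False by blast
    qed
    with base show ?thesis by blast
  qed
qed

lemma exists_perturbation_full_dim_on_hyperplane:
  fixes \<gamma> :: "'a \<Rightarrow> complex ^ 'n"
  assumes M: "matroid E Ind" and P: "paving E Ind" and R: "matroid_rank Ind = CARD('n)"
    and T: "tame E Ind" and \<gamma>: "\<gamma> \<in> circuit_variety E Ind"
    and F: "finite F" "\<forall>L'\<in>F. CARD('n) - 1 \<le> vec.dim (\<gamma> ` L')"
    and L: "dependent_hyperplane E Ind L" and "0 < \<delta>"
  shows "\<exists>\<gamma>'\<in>circuit_variety E Ind. (\<forall>p. norm (\<gamma>' p - \<gamma> p) < \<delta>)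
           \<and> (\<forall>L'\<in>insert L F. CARD('n) - 1 \<le> vec.dim (\<gamma>' ` L'))"
proof (cases "CARD('n) = 1")
  case True
  with \<gamma> F \<open>0 < \<delta>\<close> show ?thesis by (intro bexI[of _ \<gamma>]) auto
next
  case False
  have "0 < CARD('n)" by simp
  with False have "0 < CARD('n) - 1" by linarith
  have "finite L" "CARD('n) \<le> card L" using dependent_hyperplane_finite_card_ge[OF M L] R by auto
  then have "L \<noteq> {}" using \<open>0 < CARD('n)\<close> by auto
  have "\<forall>L'. dependent_hyperplane E Ind L' \<longrightarrow> vec.dim (\<gamma> ` L') \<le> CARD('n) - 1"
    using \<gamma> circuit_variety_iff_dim_hyperplanes[OF M P R] by blast
  from exists_adapted_hyperplanes[OF T this L \<open>L \<noteq> {}\<close>]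
  obtain H where H: "\<forall>L'. dependent_hyperplane E Ind L' \<longrightarrow>
        vec.subspace (H L') \<and> vec.dim (H L') = CARD('n) - 1 \<and> \<gamma> ` L' \<subseteq> H L'"
    and adapted: "(\<exists>q0\<in>L. CARD('n) - 1 \<le> vec.dim (incident_Inter E Ind H q0))
        \<or> (\<exists>q1\<in>L. \<exists>q2\<in>L. \<not> incident_Inter E Ind H q1 \<subseteq> incident_Inter E Ind H q2)"
    by blast
  let ?W = "incident_Inter E Ind H"
  have W: "\<forall>p. vec.subspace (?W p)" "\<forall>p. \<gamma> p \<in> ?W p"
    using H subspace_incident_Inter[of E Ind H] by (auto simp: mem_incident_Inter_iff)
  have room: "\<forall>q\<in>L. CARD('n) - 1 - 1 \<le> vec.dim (?W q)"
    using dim_incident_Inter_ge[OF T L _, of _ H] H by (simp add: numeral_2_eq_2)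
  have "CARD('n) - 1 \<le> card L" using \<open>CARD('n) \<le> card L\<close> by simp
  from adapted obtain g where g: "\<forall>p. g p \<in> ?W p" "\<forall>p. norm (g p - \<gamma> p) < \<delta>"
      "\<forall>L'\<in>F. CARD('n) - 1 \<le> vec.dim (g ` L')" "CARD('n) - 1 \<le> vec.dim (g ` L)"
    using exists_perturbation_dim_image_ge_if_wide_point[OF W F \<open>finite L\<close> \<open>CARD('n) - 1 \<le> card L\<close>
        _ _ room \<open>0 < CARD('n) - 1\<close> \<open>0 < \<delta>\<close>]
      exists_perturbation_dim_image_ge_if_incomparable_points[OF W F \<open>finite L\<close> \<open>CARD('n) - 1 \<le> card L\<close>
        _ _ _ room \<open>0 < CARD('n) - 1\<close> \<open>0 < \<delta>\<close>]
    by blast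
  have "g \<in> circuit_variety E Ind"
    using circuit_variety_if_incident[OF M P R _ g(1)] H by simp
  with g(2-4) show ?thesis by blast
qed

lemma exists_perturbation_full_dim_on_hyperplanes:
  fixes \<gamma> :: "'a \<Rightarrow> complex ^ 'n"
  assumes M: "matroid E Ind" and P: "paving E Ind" and R: "matroid_rank Ind = CARD('n)"
    and T: "tame E Ind"
    and F: "finite F" "\<forall>L\<in>F. dependent_hyperplane E Ind L"
    and "\<gamma> \<in> circuit_variety E Ind" "0 < \<epsilon>"
  shows "\<exists>\<gamma>'\<in>circuit_variety E Ind. (\<forall>p. norm (\<gamma>' p - \<gamma> p) < \<epsilon>)
           \<and> (\<forall>L\<in>F. CARD('n) - 1 \<le> vec.dim (\<gamma>' ` L))"
  using F assms(7,8)
proof (induction F arbitrary: \<gamma> \<epsilon> rule: finite_induct)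
  case empty
  then show ?case by (intro bexI[of _ \<gamma>]) auto
next
  case (insert L F)
  obtain \<gamma>1 where \<gamma>1: "\<gamma>1 \<in> circuit_variety E Ind" "\<forall>p. norm (\<gamma>1 p - \<gamma> p) < \<epsilon> / 2"
      "\<forall>L'\<in>F. CARD('n) - 1 \<le> vec.dim (\<gamma>1 ` L')"
    using insert.IH[of \<gamma> "\<epsilon> / 2"] insert.prems by auto
  obtain \<gamma>2 where \<gamma>2: "\<gamma>2 \<in> circuit_variety E Ind" "\<forall>p. norm (\<gamma>2 p - \<gamma>1 p) < \<epsilon> / 2"
      "\<forall>L'\<in>insert L F. CARD('n) - 1 \<le> vec.dim (\<gamma>2 ` L')"
    using exists_perturbation_full_dim_on_hyperplane[OF M P R T \<gamma>1(1) insert.hyps(1) \<gamma>1(3), of L "\<epsilon> / 2"]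
      insert.prems by auto
  have "norm (\<gamma>2 p - \<gamma> p) < \<epsilon>" for p
    using norm_diff_triangle_less[OF \<gamma>2(2)[rule_format] \<gamma>1(2)[rule_format]] by simp
  with \<gamma>2(1,3) show ?case by blast
qed

theorem lemma8p3:
  fixes d :: nat and Ind :: "nat set set" and \<gamma> :: "nat \<Rightarrow> complex ^ 'n" and \<epsilon> :: real
  assumes "matroid {1..d} Ind"
    and "matroid_rank Ind = CARD('n)"
    and "paving {1..d} Ind"
    and "tame {1..d} Ind"
    and "\<gamma> \<in> circuit_variety {1..d} Ind"
    and "\<epsilon> > 0"
  shows "\<exists>\<gamma>' \<in> circuit_variety {1..d} Ind.
           (\<forall>p\<in>{1..d}. norm (\<gamma> p - \<gamma>' p) < \<epsilon>) \<and>
           (\<forall>l. dependent_hyperplane {1..d} Ind l \<longrightarrow> vec.dim (\<gamma>' ` l) = CARD('n) - 1)"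
proof -
  obtain \<gamma>' where \<gamma>': "\<gamma>' \<in> circuit_variety {1..d} Ind" "\<forall>p. norm (\<gamma>' p - \<gamma> p) < \<epsilon>"
      "\<forall>l\<in>{l. dependent_hyperplane {1..d} Ind l}. CARD('n) - 1 \<le> vec.dim (\<gamma>' ` l)"
    using exists_perturbation_full_dim_on_hyperplanes[OF assms(1,3,2,4)
        finite_dependent_hyperplanes[OF assms(1)] _ assms(5,6)] by blast
  have "vec.dim (\<gamma>' ` l) \<le> CARD('n) - 1" if "dependent_hyperplane {1..d} Ind l" for l
    using \<gamma>'(1) that circuit_variety_iff_dim_hyperplanes[OF assms(1,3,2)] by blast
  with \<gamma>' show ?thesis by (intro bexI[of _ \<gamma>']) (auto simp: norm_minus_commute intro: antisym)
qed

end
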